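(* Let $p:X\to Y$ be a continuous map with overlay structure $\mathcal S$, and assume $X$ is connected. Let $G$ be the group of deck transformations of $p$ preserving $\mathcal S$. Then the action of $G$ on $X$ is an overlay action with overlay structure $\mathcal S$. Moreover, $p=q\circ\pi$, where $\pi:X\to X/G$ is the projection onto the orbit space (quotient topology) and $q:X/G\to Y$ is an overlay with overlay structure $\{\pi(U):U\in\mathcal S\}$.
   Context: A deck transformation of $p$ is a homeomorphism $h:X\to X$ with $p\circ h=p$; it preserves $\mathcal S$ if $h(U)\in\mathcal S$ for every $U\in\mathcal S$. For a continuous map $p:X\to Y$: a slice of $p$ is an open set $U\subseteq X$ such that $p^{-1}(p(U))$ is the disjoint union of a family of open sets $U_s$ ($s\in S$), each mapped by $p$ homeomorphically onto $p(U)$, with $U=U_t$ for some $t\in S$. A covering structure of $p$ is an open cover $\mathcal S$ of $X$ by slices of $p$ such that for every $U\in\mathcal S$, $p^{-1}(p(U))$ is the disjoint union of a family $\{U_j\}_{j\in J}$ of elements of $\mathcal S$, each mapped homeomorphically onto $p(U)$. For $x\in X$, $st(x,\mathcal S)=\bigcup\{U\in\mathcal S: x\in U\}$. An overlay structure of $p$ is a covering structure $\mathcal S$ such that $st(x,\mathcal S)$ is a slice of $p$ for every $x\in X$; $p$ is an overlay if it has one. For a free action of a group $G$ on $X$: a slice of the action is an open $U\subseteq X$ with $U\cap(g\cdot U)\neq\emptyset\Rightarrow g=1_G$. The action is an overlay action with overlay structure $\mathcal U$ if $\mathcal U$ is a covering structure of the projection $X\to X/G$ such that $st(x,\mathcal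 U)$ is a slice of the action for every $x\in X$. *)

theory Defs
  imports "HOL-Analysis.Analysis"
begin

text \<open>The disjoint family (U_s) is represented as a set of
  pairwise disjoint open sets (an indexed disjoint family of sets each homeomorphic
  to p(U) can only repeat the empty set, so nothing is lost).\<close>
definition slice_of :: "'a topology \<Rightarrow> 'b topology \<Rightarrow> ('a \<Rightarrow> 'b) \<Rightarrow> 'a set \<Rightarrow> bool" where
  "slice_of X Y p U \<longleftrightarrow> openin X U \<and>
     (\<exists>\<U>. U \<in> \<U> \<and> pairwise disjnt \<U> \<and>
        \<Union>\<U> = {x \<in> topspace X. p x \<in> p ` U} \<and>
        (\<forall>V\<in>\<U>. openin X V \<and> homeomorphic_map (subtopology X V) (subtopology Y (p ` U)) p))"

definition covering_structure :: "'a topology \<Rightarrow> 'b topology \<Rightarrow> ('a \<Rightarrow> 'b) \<Rightarrow> 'a set set \<Rightarrow> bool" where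
  "covering_structure X Y p \<S> \<longleftrightarrow>
     (\<forall>U\<in>\<S>. slice_of X Y p U) \<and> \<Union>\<S> = topspace X \<and>
     (\<forall>U\<in>\<S>. \<exists>\<U>. \<U> \<subseteq> \<S> \<and> pairwise disjnt \<U> \<and>
        \<Union>\<U> = {x \<in> topspace X. p x \<in> p ` U} \<and>
        (\<forall>V\<in>\<U>. homeomorphic_map (subtopology X V) (subtopology Y (p ` U)) p))"

definition star :: "'a \<Rightarrow> 'a set set \<Rightarrow> 'a set" where
  "star x \<S> = \<Union>{U \<in> \<S>. x \<in> U}"

definition overlay_structure :: "'a topology \<Rightarrow> 'b topology \<Rightarrow> ('a \<Rightarrow> 'b) \<Rightarrow> 'a set set \<Rightarrow> bool" where
  "overlay_structure X Y p \<S> \<longleftrightarrow>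
     covering_structure X Y p \<S> \<and> (\<forall>x\<in>topspace X. slice_of X Y p (star x \<S>))"

definition overlay_with :: "'a topology \<Rightarrow> 'b topology \<Rightarrow> ('a \<Rightarrow> 'b) \<Rightarrow> 'a set set \<Rightarrow> bool" where
  "overlay_with X Y p \<S> \<longleftrightarrow> continuous_map X Y p \<and> overlay_structure X Y p \<S>"

definition deck_preserving :: "'a topology \<Rightarrow> ('a \<Rightarrow> 'b) \<Rightarrow> 'a set set \<Rightarrow> ('a \<Rightarrow> 'a) set" where
  "deck_preserving X p \<S> = {h. homeomorphic_map X X h \<and> (\<forall>x\<in>topspace X. p (h x) = p x)
                                 \<and> (\<forall>U\<in>\<S>. h ` U \<in> \<S>)}"

text \<open>Group actions of a set of self-maps G of X (acting by evaluation). Two maps are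
  identified when they agree on topspace X; "g = 1" means g is the identity on X.\<close>
definition orbit_of :: "('a \<Rightarrow> 'a) set \<Rightarrow> 'a \<Rightarrow> 'a set" where
  "orbit_of G x = {g x |g. g \<in> G}"

definition quotient_top :: "'a topology \<Rightarrow> ('a \<Rightarrow> 'b) \<Rightarrow> 'b topology" where
  "quotient_top X f = topology (\<lambda>U. U \<subseteq> f ` topspace X \<and> openin X {x \<in> topspace X. f x \<in> U})"

lemma istopology_quotient:
  "istopology (\<lambda>U. U \<subseteq> f ` topspace X \<and> openin X {x \<in> topspace X. f x \<in> U})"
  unfolding istopology_def
proof (rule conjI; intro allI impI)
  fix S T assume S: "S \<subseteq> f ` topspace X \<and> openin X {x \<in> topspace X. f x \<in> S}"
    and T: "T \<subseteq> f ` topspace X \<and> openin X {x \<in> topspace X. f x \<in> T}"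
  have "{x \<in> topspace X. f x \<in> S \<inter> T} = {x \<in> topspace X. f x \<in> S} \<inter> {x \<in> topspace X. f x \<in> T}"
    by auto
  then show "S \<inter> T \<subseteq> f ` topspace X \<and> openin X {x \<in> topspace X. f x \<in> S \<inter> T}"
    using S T by auto
next
  fix K assume K: "\<forall>S\<in>K. S \<subseteq> f ` topspace X \<and> openin X {x \<in> topspace X. f x \<in> S}"
  have "{x \<in> topspace X. f x \<in> \<Union>K} = (\<Union>S\<in>K. {x \<in> topspace X. f x \<in> S})" by auto
  then show "\<Union>K \<subseteq> f ` topspace X \<and> openin X {x \<in> topspace X. f x \<in> \<Union>K}"
    using K by (auto intro!: openin_Union)
qed

lemma openin_quotient_top:
  "openin (quotient_top X f) U \<longleftrightarrow> U \<subseteq> f ` topspace X \<and> openin X {x \<in> topspace X. f x \<in> U}"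
  unfolding quotient_top_def by (simp add: topology_inverse'[OF istopology_quotient])

definition orbit_space :: "'a topology \<Rightarrow> ('a \<Rightarrow> 'a) set \<Rightarrow> 'a set topology" where
  "orbit_space X G = quotient_top X (orbit_of G)"

definition free_action :: "'a topology \<Rightarrow> ('a \<Rightarrow> 'a) set \<Rightarrow> bool" where
  "free_action X G \<longleftrightarrow> (\<forall>g\<in>G. \<forall>x\<in>topspace X. g x = x \<longrightarrow> (\<forall>y\<in>topspace X. g y = y))"

definition action_slice :: "'a topology \<Rightarrow> ('a \<Rightarrow> 'a) set \<Rightarrow> 'a set \<Rightarrow> bool" where
  "action_slice X G U \<longleftrightarrow> openin X U \<and>
     (\<forall>g\<in>G. U \<inter> g ` U \<noteq> {} \<longrightarrow> (\<forall>y\<in>topspace X. g y = y))"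

definition overlay_action :: "'a topology \<Rightarrow> ('a \<Rightarrow> 'a) set \<Rightarrow> 'a set set \<Rightarrow> bool" where
  "overlay_action X G \<U> \<longleftrightarrow> free_action X G \<and>
     covering_structure X (orbit_space X G) (orbit_of G) \<U> \<and>
     (\<forall>x\<in>topspace X. action_slice X G (star x \<U>))"

end

theory Submission
  imports Defs
begin

text \<open>Members of an overlay structure \<open>\<S>\<close> that meet and have the same image under \<open>p\<close>
  coincide, because stars are slices and \<open>p\<close> is injective on them. Hence a deck transformation
  preserving \<open>\<S>\<close> either fixes a member pointwise or moves it off itself; its fixed-point set is
  clopen, so on a connected space it is the identity once it fixes a point. This gives freeness of
  the action and shows that stars are slices of it.

  The orbit projection is open, and on every open set where \<open>p\<close> is injective it is a
  homeomorphism onto its image. Therefore the map \<open>q\<close> induced by \<open>p\<close> on orbits sends every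
  deck-invariant decomposition of \<open>p\<^sup>-\<^sup>1(p A)\<close> into sheets to a decomposition of
  \<open>q\<^sup>-\<^sup>1(q (orb A))\<close>. Such invariant decompositions exist both for members of \<open>\<S>\<close> and for
  stars, so the orbits of \<open>\<S>\<close> form an overlay structure of \<open>q\<close>.\<close>

definition sheets_over :: "'a topology \<Rightarrow> 'b topology \<Rightarrow> ('a \<Rightarrow> 'b) \<Rightarrow> 'a set \<Rightarrow> 'a set set \<Rightarrow> bool" where
  "sheets_over X Y p A \<U> \<longleftrightarrow> A \<in> \<U> \<and> pairwise disjnt \<U> \<and> \<Union>\<U> = {x \<in> topspace X. p x \<in> p ` A} \<and>
     (\<forall>V\<in>\<U>. openin X V \<and> homeomorphic_map (subtopology X V) (subtopology Y (p ` A)) p)"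

lemma slice_of_iff_sheets_over: "slice_of X Y p A \<longleftrightarrow> (\<exists>\<U>. sheets_over X Y p A \<U>)"
  unfolding slice_of_def sheets_over_def by blast

lemma covering_structureI:
  assumes "\<Union>\<S> = topspace X" and "\<And>U. U \<in> \<S> \<Longrightarrow> \<exists>\<U> \<subseteq> \<S>. sheets_over X Y p U \<U>"
  shows "covering_structure X Y p \<S>"
  unfolding covering_structure_def
proof (intro conjI ballI)
  fix U assume "U \<in> \<S>"
  then obtain \<U> where \<U>: "\<U> \<subseteq> \<S>" "sheets_over X Y p U \<U>" using assms(2) by blast
  then show "slice_of X Y p U" by (auto simp: slice_of_iff_sheets_over)
  show "\<exists>\<U>. \<U> \<subseteq> \<S> \<and> pairwise disjnt \<U> \<and> \<Union>\<U> = {x \<in> topspace X. p x \<in> p ` U} \<and>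
        (\<forall>V\<in>\<U>. homeomorphic_map (subtopology X V) (subtopology Y (p ` U)) p)"
    using \<U> unfolding sheets_over_def by blast
qed (rule assms(1))

lemma homeomorphic_map_subtopologiesD:
  assumes "homeomorphic_map (subtopology X V) (subtopology Y T) p"
    and "V \<subseteq> topspace X" and "T \<subseteq> topspace Y"
  shows "p ` V = T" "inj_on p V"
  using homeomorphic_imp_surjective_map[OF assms(1)] homeomorphic_imp_injective_map[OF assms(1)]
  by (simp_all add: Int_absorb1[OF assms(2)] Int_absorb1[OF assms(3)])

lemma slice_of_homeomorphic_map:
  assumes "slice_of X Y p A" and "B \<subseteq> A"
  shows "homeomorphic_map (subtopology X B) (subtopology Y (p ` B)) p"
proof -
  have A: "A \<subseteq> topspace X" "homeomorphic_map (subtopology X A) (subtopology Y (p ` A)) p"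
    using assms(1) by (auto simp: slice_of_def openin_subset)
  have "p ` A \<subseteq> topspace Y"
    using continuous_map_image_subset_topspace[OF homeomorphic_imp_continuous_map[OF A(2)]]
    by (simp add: Int_absorb1[OF A(1)])
  then have "p ` (topspace (subtopology X A) \<inter> B) = topspace (subtopology Y (p ` A)) \<inter> p ` B"
    using assms(2) A(1) by auto
  from homeomorphic_map_subtopologies[OF A(2) this] show ?thesis
    using assms(2) by (simp add: subtopology_subtopology Int_absorb1 image_mono)
qed

lemma slice_of_inj_on:
  assumes "slice_of X Y p A"
  shows "inj_on p A"
proof -
  have "A \<subseteq> topspace X" using assms by (simp add: slice_of_def openin_subset)
  with homeomorphic_imp_injective_map[OF slice_of_homeomorphic_map[OF assms order_refl]]
  show ?thesis by (simp add: Int_absorb1)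
qed

lemma subset_star: "U \<in> \<S> \<Longrightarrow> x \<in> U \<Longrightarrow> U \<subseteq> star x \<S>"
  by (auto simp: star_def)

text \<open>Applied to orbits, on which \<open>p\<close> is constant, this is the map induced by \<open>p\<close>.\<close>
definition class_map :: "('a \<Rightarrow> 'b) \<Rightarrow> 'a set \<Rightarrow> 'b" where
  "class_map p B = p (SOME x. x \<in> B)"

locale overlay =
  fixes X :: "'a topology" and Y :: "'b topology" and p :: "'a \<Rightarrow> 'b" and \<S> :: "'a set set"
  assumes overlay_with: "overlay_with X Y p \<S>"
begin

abbreviation "G \<equiv> deck_preserving X p \<S>"
abbreviation "orb \<equiv> orbit_of G"
abbreviation "XG \<equiv> orbit_space X G"
abbreviation "q \<equiv> class_map p"

lemma continuous_map_p: "continuous_map X Y p"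
  using overlay_with by (simp add: overlay_with_def)

lemma covering_structure: "covering_structure X Y p \<S>"
  using overlay_with by (simp add: overlay_with_def overlay_structure_def)

lemma slice_of_star: "x \<in> topspace X \<Longrightarrow> slice_of X Y p (star x \<S>)"
  using overlay_with by (simp add: overlay_with_def overlay_structure_def)

lemma slice_of_member: "U \<in> \<S> \<Longrightarrow> slice_of X Y p U"
  using covering_structure by (simp add: covering_structure_def)

lemma Union_members: "\<Union>\<S> = topspace X"
  using covering_structure by (simp add: covering_structure_def)

lemma openin_member: "U \<in> \<S> \<Longrightarrow> openin X U"
  using slice_of_member by (simp add: slice_of_def)

lemma member_subset_topspace: "U \<in> \<S> \<Longrightarrow> U \<subseteq> topspace X"
  using Union_members by blast

lemma openin_star: "openin X (star x \<S>)"
  unfolding star_def by (rule openin_Union) (simp add: openin_member)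

lemma star_subset_topspace: "star x \<S> \<subseteq> topspace X"
  using openin_star openin_subset by blast

lemma image_subset_topspace: "A \<subseteq> topspace X \<Longrightarrow> p ` A \<subseteq> topspace Y"
  using continuous_map_p continuous_map_image_subset_topspace by blast

lemma inj_on_star: "x \<in> topspace X \<Longrightarrow> inj_on p (star x \<S>)"
  using slice_of_star slice_of_inj_on by blast

lemma member_eqI:
  assumes "A \<in> \<S>" "B \<in> \<S>" "A \<inter> B \<noteq> {}" "p ` A = p ` B"
  shows "A = B"
proof -
  obtain z where z: "z \<in> A" "z \<in> B" using assms(3) by blast
  then have "z \<in> topspace X" using assms(1) member_subset_topspace by blast
  then have "inj_on p (star z \<S>)" by (rule inj_on_star)
  moreover have "A \<subseteq> star z \<S>" "B \<subseteq> star z \<S>"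
    using subset_star[OF assms(1) z(1)] subset_star[OF assms(2) z(2)] by auto
  ultimately show ?thesis using inj_on_image_eq_iff assms(4) by blast
qed

lemma sheet_through:
  assumes "U \<in> \<S>" "z \<in> topspace X" "p z \<in> p ` U"
  obtains V where "V \<in> \<S>" "z \<in> V" "p ` V = p ` U"
proof -
  have "\<forall>U\<in>\<S>. \<exists>\<U>. \<U> \<subseteq> \<S> \<and> pairwise disjnt \<U> \<and> \<Union>\<U> = {x \<in> topspace X. p x \<in> p ` U} \<and>
      (\<forall>V\<in>\<U>. homeomorphic_map (subtopology X V) (subtopology Y (p ` U)) p)"
    using covering_structure unfolding covering_structure_def by (elim conjE)
  then obtain \<U> where \<U>: "\<U> \<subseteq> \<S>" "\<Union>\<U> = {x \<in> topspace X. p x \<in> p ` U}"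
    "\<forall>V\<in>\<U>. homeomorphic_map (subtopology X V) (subtopology Y (p ` U)) p"
    using assms(1) by meson
  then obtain V where V: "V \<in> \<U>" "z \<in> V" using assms(2,3) by blast
  have "homeomorphic_map (subtopology X V) (subtopology Y (p ` U)) p" using \<U>(3) V(1) by blast
  then have "p ` V = p ` U"
    using homeomorphic_map_subtopologiesD(1) \<U>(1) V(1) member_subset_topspace
      image_subset_topspace assms(1) by blast
  then show ?thesis using that V \<U>(1) by blast
qed

lemma mem_deck_preserving:
  "g \<in> G \<longleftrightarrow> homeomorphic_map X X g \<and> (\<forall>x\<in>topspace X. p (g x) = p x) \<and> (\<forall>U\<in>\<S>. g ` U \<in> \<S>)"
  by (simp add: deck_preserving_def)

lemma deck_topspace: "g \<in> G \<Longrightarrow> x \<in> topspace X \<Longrightarrow> g x \<in> topspace X"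
  using mem_deck_preserving homeomorphic_imp_surjective_map by blast

lemma deck_p: "g \<in> G \<Longrightarrow> x \<in> topspace X \<Longrightarrow> p (g x) = p x"
  using mem_deck_preserving by blast

lemma deck_member: "g \<in> G \<Longrightarrow> U \<in> \<S> \<Longrightarrow> g ` U \<in> \<S>"
  using mem_deck_preserving by blast

lemma deck_image_p:
  assumes "g \<in> G" "A \<subseteq> topspace X"
  shows "p ` g ` A = p ` A"
proof -
  have "\<forall>x\<in>A. p (g x) = p x" using assms deck_p by blast
  then show ?thesis by (simp add: image_image cong: image_cong)
qed

lemma deck_id: "(\<lambda>x. x) \<in> G"
  using homeomorphic_map_id[of X X] by (simp add: mem_deck_preserving id_def)

lemma deck_comp: assumes "g \<in> G" "h \<in> G" shows "(\<lambda>x. g (h x)) \<in> G"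
proof -
  have "homeomorphic_map X X (g \<circ> h)"
    using homeomorphic_map_compose assms mem_deck_preserving by blast
  moreover have "\<forall>x\<in>topspace X. p (g (h x)) = p x"
    using assms deck_p deck_topspace by simp
  moreover have "\<forall>U\<in>\<S>. (\<lambda>x. g (h x)) ` U \<in> \<S>"
    using assms deck_member by (metis image_image)
  ultimately show ?thesis by (simp add: mem_deck_preserving o_def)
qed

lemma deck_inverse:
  assumes g: "g \<in> G"
  obtains k where "k \<in> G" "\<And>x. x \<in> topspace X \<Longrightarrow> k (g x) = x" "\<And>x. x \<in> topspace X \<Longrightarrow> g (k x) = x"
proof -
  obtain k where "homeomorphic_maps X X g k"
    using g mem_deck_preserving homeomorphic_map_maps by blast
  then have k: "homeomorphic_map X X k" and kg: "\<forall>x\<in>topspace X. k (g x) = x"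
    and gk: "\<forall>x\<in>topspace X. g (k x) = x"
    by (auto simp: homeomorphic_maps_map)
  have k_topspace: "x \<in> topspace X \<Longrightarrow> k x \<in> topspace X" for x
    using k homeomorphic_imp_surjective_map by blast
  have kp: "\<forall>x\<in>topspace X. p (k x) = p x"
    using gk k_topspace deck_p g by metis
  \<comment> \<open>\<open>g\<close> maps the member through \<open>k u\<close> over \<open>p ` U\<close> onto \<open>U\<close>, so \<open>k\<close> maps \<open>U\<close> back onto it.\<close>
  have "k ` U \<in> \<S>" if U: "U \<in> \<S>" for U
  proof (cases "U = {}")
    case False
    then obtain u where u: "u \<in> U" by blast
    have ut: "u \<in> topspace X" using u U member_subset_topspace by blast
    obtain V where V: "V \<in> \<S>" "k u \<in> V" "p ` V = p ` U"
      using sheet_through[OF U k_topspace[OF ut]] kp u ut by auto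
    have "g ` V = U"
    proof (rule member_eqI)
      show "g ` V \<in> \<S>" "U \<in> \<S>" using deck_member g V U by auto
      show "g ` V \<inter> U \<noteq> {}" using V(2) gk ut u by (metis IntI empty_iff imageI)
      show "p ` g ` V = p ` U" using deck_image_p[OF g member_subset_topspace] V by simp
    qed
    moreover have "k ` g ` V = V"
    proof -
      have "\<forall>v\<in>V. k (g v) = v" using kg member_subset_topspace[OF V(1)] by blast
      then show ?thesis by (simp add: image_image cong: image_cong)
    qed
    ultimately show ?thesis using V(1) by simp
  qed (use U in simp)
  then have "k \<in> G" using k kp by (simp add: mem_deck_preserving)
  then show ?thesis using that kg gk by blast
qed

lemma mem_orbit_of: "y \<in> orb x \<longleftrightarrow> (\<exists>g\<in>G. y = g x)"
  by (auto simp: orbit_of_def)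

lemma orbit_of_deck:
  assumes g: "g \<in> G" and x: "x \<in> topspace X"
  shows "orb (g x) = orb x"
proof (rule set_eqI)
  obtain k where k: "k \<in> G" "\<And>z. z \<in> topspace X \<Longrightarrow> k (g z) = z"
    "\<And>z. z \<in> topspace X \<Longrightarrow> g (k z) = z"
    using deck_inverse[OF g] by metis
  fix y
  show "y \<in> orb (g x) \<longleftrightarrow> y \<in> orb x"
    unfolding mem_orbit_of
  proof
    assume "\<exists>h\<in>G. y = h (g x)"
    then obtain h where h: "h \<in> G" "y = h (g x)" by blast
    show "\<exists>h\<in>G. y = h x"
    proof
      show "(\<lambda>z. h (g z)) \<in> G" using deck_comp h(1) g .
    qed (simp add: h(2))
  next
    assume "\<exists>h\<in>G. y = h x"
    then obtain h where h: "h \<in> G" "y = h x" by blast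
    show "\<exists>h\<in>G. y = h (g x)"
    proof
      show "(\<lambda>z. h (k z)) \<in> G" using deck_comp h(1) k(1) .
    qed (simp add: h(2) k(2)[OF x])
  qed
qed

lemma orbit_of_self: "x \<in> orb x"
  unfolding mem_orbit_of using deck_id by force

lemma orbit_of_eq_iff:
  assumes "x \<in> topspace X" "y \<in> topspace X"
  shows "orb x = orb y \<longleftrightarrow> (\<exists>g\<in>G. y = g x)"
proof
  assume "orb x = orb y"
  then have "y \<in> orb x" using orbit_of_self by simp
  then show "\<exists>g\<in>G. y = g x" by (simp add: mem_orbit_of)
next
  assume "\<exists>g\<in>G. y = g x"
  then obtain g where "g \<in> G" "y = g x" by blast
  then show "orb x = orb y" using orbit_of_deck assms(1) by simp
qed

lemma p_eq_if_orbit_of_eq: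
  assumes "x \<in> topspace X" "y \<in> topspace X" "orb x = orb y"
  shows "p x = p y"
proof -
  obtain g where "g \<in> G" "y = g x" using orbit_of_eq_iff[OF assms(1,2)] assms(3) by blast
  then show ?thesis using deck_p assms(1) by simp
qed

lemma orbit_of_image_deck:
  assumes "g \<in> G" "A \<subseteq> topspace X"
  shows "orb ` g ` A = orb ` A"
proof -
  have "\<forall>x\<in>A. orb (g x) = orb x" using assms orbit_of_deck by blast
  then show ?thesis by (simp add: image_image cong: image_cong)
qed

lemma saturation_orbit_of_image:
  assumes "A \<subseteq> topspace X"
  shows "{x \<in> topspace X. orb x \<in> orb ` A} = (\<Union>g\<in>G. g ` A)"
proof (intro set_eqI iffI)
  fix x assume "x \<in> {x \<in> topspace X. orb x \<in> orb ` A}"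
  then obtain a where a: "x \<in> topspace X" "a \<in> A" "orb a = orb x" by auto
  then have "a \<in> topspace X" using assms by blast
  then obtain g where "g \<in> G" "x = g a" using orbit_of_eq_iff[of a x] a by auto
  with \<open>a \<in> A\<close> show "x \<in> (\<Union>g\<in>G. g ` A)" by blast
next
  fix x assume "x \<in> (\<Union>g\<in>G. g ` A)"
  then obtain g a where "g \<in> G" "a \<in> A" "x = g a" by blast
  moreover have "a \<in> topspace X" using \<open>a \<in> A\<close> assms by blast
  ultimately show "x \<in> {x \<in> topspace X. orb x \<in> orb ` A}"
    using deck_topspace orbit_of_deck by auto
qed

lemma openin_orbit_space:
  "openin XG W \<longleftrightarrow> W \<subseteq> orb ` topspace X \<and> openin X {x \<in> topspace X. orb x \<in> W}"
  by (simp add: orbit_space_def openin_quotient_top)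

lemma topspace_orbit_space: "topspace XG = orb ` topspace X"
proof
  show "topspace XG \<subseteq> orb ` topspace X"
    using openin_orbit_space[of "topspace XG"] by simp
  have "{x \<in> topspace X. orb x \<in> orb ` topspace X} = topspace X" by blast
  then have "openin XG (orb ` topspace X)" by (simp add: openin_orbit_space)
  then show "orb ` topspace X \<subseteq> topspace XG" by (rule openin_subset)
qed

lemma continuous_map_orbit_of: "continuous_map X XG orb"
  unfolding continuous_map_def
proof (intro conjI allI impI)
  show "orb \<in> topspace X \<rightarrow> topspace XG" using topspace_orbit_space by auto
  fix W assume "openin XG W"
  then show "openin X {x \<in> topspace X. orb x \<in> W}" by (simp add: openin_orbit_space)
qed

lemma openin_orbit_of_image:
  assumes "openin X A"
  shows "openin XG (orb ` A)"
proof -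
  have A: "A \<subseteq> topspace X" using assms openin_subset by blast
  have "openin X (g ` A)" if "g \<in> G" for g
  proof -
    have "homeomorphic_map X X g" using that mem_deck_preserving by simp
    then show ?thesis using homeomorphic_map_openness_eq[of X X g A] assms A by simp
  qed
  then have "openin X {x \<in> topspace X. orb x \<in> orb ` A}"
    unfolding saturation_orbit_of_image[OF A] by (intro openin_Union) auto
  then show ?thesis using A by (simp add: openin_orbit_space image_mono)
qed

lemma homeomorphic_map_orbit_of:
  assumes V: "openin X V" "inj_on p V"
  shows "homeomorphic_map (subtopology X V) (subtopology XG (orb ` V)) orb"
proof (rule bijective_open_imp_homeomorphic_map)
  have Vt: "V \<subseteq> topspace X" using V openin_subset by blast
  then have tV: "topspace (subtopology X V) = V" by (rule topspace_subtopology_subset)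
  show "continuous_map (subtopology X V) (subtopology XG (orb ` V)) orb"
    using continuous_map_into_subtopology[OF continuous_map_from_subtopology[OF continuous_map_orbit_of]]
    by (simp add: tV)
  show "open_map (subtopology X V) (subtopology XG (orb ` V)) orb"
    unfolding open_map_def
  proof (intro allI impI)
    fix W assume "openin (subtopology X V) W"
    then have "openin X W" "W \<subseteq> V" using openin_open_subtopology[OF V(1)] by auto
    then show "openin (subtopology XG (orb ` V)) (orb ` W)"
      using openin_open_subtopology[OF openin_orbit_of_image[OF V(1)]] openin_orbit_of_image
      by (simp add: image_mono)
  qed
  show "orb ` topspace (subtopology X V) = topspace (subtopology XG (orb ` V))"
    using tV topspace_orbit_space Vt by auto
  show "inj_on orb (topspace (subtopology X V))"
    using V(2) Vt p_eq_if_orbit_of_eq unfolding tV inj_on_def by (meson subsetD)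
qed

lemma class_map_orbit_of:
  assumes "x \<in> topspace X"
  shows "q (orb x) = p x"
proof -
  have "(SOME y. y \<in> orb x) \<in> orb x" using orbit_of_self by (rule someI)
  then obtain g where "g \<in> G" "(SOME y. y \<in> orb x) = g x" unfolding mem_orbit_of by blast
  then show ?thesis unfolding class_map_def using deck_p assms by simp
qed

lemma continuous_map_class_map: "continuous_map XG Y q"
  unfolding continuous_map_def
proof (intro conjI allI impI)
  show "q \<in> topspace XG \<rightarrow> topspace Y"
  proof
    fix B assume "B \<in> topspace XG"
    then obtain x where "x \<in> topspace X" "B = orb x" by (auto simp: topspace_orbit_space)
    then show "q B \<in> topspace Y" using image_subset_topspace[of "{x}"] class_map_orbit_of by simp
  qed
  fix W assume "openin Y W"
  then have "openin X {x \<in> topspace X. p x \<in> W}"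
    by (rule openin_continuous_map_preimage[OF continuous_map_p])
  moreover have "{x \<in> topspace X. orb x \<in> {B \<in> topspace XG. q B \<in> W}} = {x \<in> topspace X. p x \<in> W}"
    using topspace_orbit_space class_map_orbit_of by auto
  ultimately show "openin XG {B \<in> topspace XG. q B \<in> W}"
    unfolding openin_orbit_space using topspace_orbit_space by auto
qed

lemma class_map_image: "A \<subseteq> topspace X \<Longrightarrow> q ` orb ` A = p ` A"
  by (simp add: image_image class_map_orbit_of subset_eq cong: image_cong)

lemma homeomorphic_map_class_map:
  assumes V: "openin X V" and hom: "homeomorphic_map (subtopology X V) (subtopology Y (p ` V)) p"
  shows "homeomorphic_map (subtopology XG (orb ` V)) (subtopology Y (p ` V)) q"
proof -
  have Vt: "V \<subseteq> topspace X" using V openin_subset by blast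
  have "inj_on p V" using homeomorphic_map_subtopologiesD(2)[OF hom Vt image_subset_topspace[OF Vt]] .
  then obtain r where "homeomorphic_maps (subtopology X V) (subtopology XG (orb ` V)) orb r"
    using homeomorphic_map_orbit_of[OF V] homeomorphic_map_maps by blast
  then have r: "homeomorphic_map (subtopology XG (orb ` V)) (subtopology X V) r"
    and orb_r: "\<And>w. w \<in> topspace (subtopology XG (orb ` V)) \<Longrightarrow> orb (r w) = w"
    by (auto simp: homeomorphic_maps_map)
  have r_in: "r w \<in> V" if "w \<in> topspace (subtopology XG (orb ` V))" for w
    using continuous_map_image_subset_topspace[OF homeomorphic_imp_continuous_map[OF r]] that Vt
    by (auto simp: topspace_subtopology_subset)
  show ?thesis
  proof (rule homeomorphic_map_eq)
    show "homeomorphic_map (subtopology XG (orb ` V)) (subtopology Y (p ` V)) (p \<circ> r)"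
      using homeomorphic_map_compose[OF r hom] .
    fix w assume w: "w \<in> topspace (subtopology XG (orb ` V))"
    then have "r w \<in> topspace X" using r_in Vt by blast
    then have "q (orb (r w)) = p (r w)" by (rule class_map_orbit_of)
    then show "(p \<circ> r) w = q w" using orb_r[OF w] by simp
  qed
qed

lemma pairwise_disjnt_orbit_images:
  assumes disj: "pairwise disjnt \<V>" and invariant: "\<And>g V. g \<in> G \<Longrightarrow> V \<in> \<V> \<Longrightarrow> g ` V \<in> \<V>"
    and Vt: "\<And>V. V \<in> \<V> \<Longrightarrow> V \<subseteq> topspace X"
  shows "pairwise disjnt ((`) orb ` \<V>)"
proof (rule pairwiseI)
  fix B C assume "B \<in> (`) orb ` \<V>" "C \<in> (`) orb ` \<V>" "B \<noteq> C"
  then obtain V V' where V': "V \<in> \<V>" "V' \<in> \<V>" "B = orb ` V" "C = orb ` V'" "orb ` V \<noteq> orb ` V'"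
    by blast
  show "disjnt B C"
  proof (rule ccontr)
    assume "\<not> disjnt B C"
    then obtain v v' where v: "v \<in> V" "v' \<in> V'" "orb v = orb v'" using V' by (auto simp: disjnt_def)
    then obtain g where g: "g \<in> G" "v' = g v" using orbit_of_eq_iff Vt V' by blast
    then have "\<not> disjnt (g ` V) V'" using v by (auto simp: disjnt_def)
    then have "g ` V = V'" using disj invariant[OF g(1) V'(1)] V'(2) by (meson pairwiseD)
    then show False using orbit_of_image_deck[OF g(1) Vt[OF V'(1)]] V'(5) by simp
  qed
qed

lemma sheets_over_orbit_space:
  assumes sheets: "sheets_over X Y p A \<V>" and invariant: "\<And>g V. g \<in> G \<Longrightarrow> V \<in> \<V> \<Longrightarrow> g ` V \<in> \<V>"
  shows "sheets_over XG Y q (orb ` A) ((`) orb ` \<V>)"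
proof -
  have A: "A \<in> \<V>" and disj: "pairwise disjnt \<V>" and cover: "\<Union>\<V> = {x \<in> topspace X. p x \<in> p ` A}"
    and sheet: "\<And>V. V \<in> \<V> \<Longrightarrow> openin X V \<and> homeomorphic_map (subtopology X V) (subtopology Y (p ` A)) p"
    using sheets by (auto simp: sheets_over_def)
  have Vt: "V \<subseteq> topspace X" if "V \<in> \<V>" for V using sheet[OF that] openin_subset by blast
  have pV: "p ` V = p ` A" if "V \<in> \<V>" for V
    using homeomorphic_map_subtopologiesD(1) sheet[OF that] Vt[OF that] image_subset_topspace[OF Vt[OF A]] by blast
  have qA: "q ` orb ` A = p ` A" using class_map_image Vt[OF A] by blast
  have "pairwise disjnt ((`) orb ` \<V>)"
    using pairwise_disjnt_orbit_images[OF disj invariant Vt] .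
  moreover have "\<Union>((`) orb ` \<V>) = {B \<in> topspace XG. q B \<in> q ` orb ` A}"
  proof -
    have "\<Union>((`) orb ` \<V>) = orb ` {x \<in> topspace X. p x \<in> p ` A}" using cover by blast
    also have "\<dots> = {B \<in> topspace XG. q B \<in> q ` orb ` A}"
      unfolding qA topspace_orbit_space using class_map_orbit_of by auto
    finally show ?thesis .
  qed
  moreover have "openin XG W \<and> homeomorphic_map (subtopology XG W) (subtopology Y (q ` orb ` A)) q"
    if W: "W \<in> (`) orb ` \<V>" for W
  proof -
    obtain V where V': "V \<in> \<V>" "W = orb ` V" using W by blast
    have V_open: "openin X V" using sheet[OF V'(1)] by blast
    have "homeomorphic_map (subtopology X V) (subtopology Y (p ` V)) p" using sheet pV V'(1) by simp
    then have "homeomorphic_map (subtopology XG (orb ` V)) (subtopology Y (p ` V)) q"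
      by (rule homeomorphic_map_class_map[OF V_open])
    then show ?thesis using openin_orbit_of_image[OF V_open] pV[OF V'(1)] qA V'(2) by simp
  qed
  ultimately show ?thesis using A by (auto simp: sheets_over_def)
qed

lemma member_sheets:
  assumes U: "U \<in> \<S>"
  shows "\<exists>\<V> \<subseteq> \<S>. sheets_over X Y p U \<V> \<and> (\<forall>g\<in>G. \<forall>V\<in>\<V>. g ` V \<in> \<V>)"
proof (intro exI conjI ballI)
  define \<V> where "\<V> = insert U {V \<in> \<S>. V \<noteq> {} \<and> p ` V = p ` U}"
  have mem: "V \<in> \<S>" "p ` V = p ` U" if "V \<in> \<V>" for V
    using that U by (auto simp: \<V>_def)
  show "\<V> \<subseteq> \<S>" using mem by blast
  have "pairwise disjnt \<V>"
  proof (rule pairwiseI)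
    fix V W assume V: "V \<in> \<V>" and W: "W \<in> \<V>" and "V \<noteq> W"
    moreover have "V \<inter> W \<noteq> {} \<Longrightarrow> V = W"
      by (rule member_eqI) (simp_all add: mem[OF V] mem[OF W])
    ultimately show "disjnt V W" by (auto simp: disjnt_def)
  qed
  moreover have "\<Union>\<V> = {x \<in> topspace X. p x \<in> p ` U}"
  proof
    show "\<Union>\<V> \<subseteq> {x \<in> topspace X. p x \<in> p ` U}"
      using mem member_subset_topspace by blast
    show "{x \<in> topspace X. p x \<in> p ` U} \<subseteq> \<Union>\<V>"
    proof
      fix z assume "z \<in> {x \<in> topspace X. p x \<in> p ` U}"
      then obtain V where "V \<in> \<S>" "z \<in> V" "p ` V = p ` U" using sheet_through[OF U] by blast
      then show "z \<in> \<Union>\<V>" by (auto simp: \<V>_def)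
    qed
  qed
  moreover have "openin X V \<and> homeomorphic_map (subtopology X V) (subtopology Y (p ` U)) p"
    if "V \<in> \<V>" for V
    using openin_member[OF mem(1)] slice_of_homeomorphic_map[OF slice_of_member[OF mem(1)] order_refl]
      mem(2) that by simp
  ultimately show "sheets_over X Y p U \<V>" by (simp add: sheets_over_def \<V>_def)
  fix g V assume g: "g \<in> G" and V: "V \<in> \<V>"
  show "g ` V \<in> \<V>"
  proof (cases "V = {}")
    case False
    have "g ` V \<in> \<S>" "p ` g ` V = p ` U"
      using deck_member[OF g] deck_image_p[OF g member_subset_topspace] mem[OF V] by simp_all
    then show ?thesis using False by (simp add: \<V>_def)
  qed (use V in simp)
qed

text \<open>Defining the
  sheets through members of \<open>\<S>\<close> rather than through an arbitrary slice decomposition of the star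
  makes the decomposition deck-invariant.\<close>
definition star_sheet :: "'a \<Rightarrow> 'a \<Rightarrow> 'a set" where
  "star_sheet x y = \<Union>{V \<in> \<S>. y \<in> V \<and> p ` V \<subseteq> p ` star x \<S>}"

lemma openin_star_sheet: "openin X (star_sheet x y)"
  unfolding star_sheet_def by (rule openin_Union) (simp add: openin_member)

lemma star_sheet_subset_star: "star_sheet x y \<subseteq> star y \<S>"
  by (auto simp: star_sheet_def star_def)

lemma member_subset_star_sheet:
  assumes "V \<in> \<S>" "y \<in> V" "p ` V \<subseteq> p ` star x \<S>"
  shows "V \<subseteq> star_sheet x y"
  using assms by (auto simp: star_sheet_def)

lemma image_member_subset_image_star:
  assumes "U \<in> \<S>" "x \<in> U"
  shows "p ` U \<subseteq> p ` star x \<S>"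
  using subset_star[OF assms] by (rule image_mono)

lemma star_sheet_self: "star_sheet x x = star x \<S>"
proof
  show "star_sheet x x \<subseteq> star x \<S>" by (rule star_sheet_subset_star)
  show "star x \<S> \<subseteq> star_sheet x x"
  proof
    fix z assume "z \<in> star x \<S>"
    then obtain U where U: "U \<in> \<S>" "x \<in> U" "z \<in> U" by (auto simp: star_def)
    then show "z \<in> star_sheet x x"
      using member_subset_star_sheet image_member_subset_image_star by blast
  qed
qed

lemma image_star_sheet:
  assumes "y \<in> topspace X" "p y = p x"
  shows "p ` star_sheet x y = p ` star x \<S>"
proof
  show "p ` star_sheet x y \<subseteq> p ` star x \<S>" by (auto simp: star_sheet_def)
  show "p ` star x \<S> \<subseteq> p ` star_sheet x y"
  proof
    fix b assume "b \<in> p ` star x \<S>"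
    then obtain U w where U: "U \<in> \<S>" "x \<in> U" "w \<in> U" "b = p w" by (auto simp: star_def)
    obtain V where V: "V \<in> \<S>" "y \<in> V" "p ` V = p ` U"
      using sheet_through[OF U(1) assms(1)] assms(2) U(2) by auto
    then have "V \<subseteq> star_sheet x y"
      using member_subset_star_sheet image_member_subset_image_star[OF U(1,2)] by simp
    moreover have "b \<in> p ` V" using V U by simp
    ultimately show "b \<in> p ` star_sheet x y" by blast
  qed
qed

lemma star_sheet_eqI:
  assumes "p y = p y'" "z \<in> star_sheet x y" "z \<in> star_sheet x y'"
  shows "y = y'"
proof -
  have "y \<in> star z \<S>" "y' \<in> star z \<S>" using assms(2,3) by (auto simp: star_sheet_def star_def)
  moreover have "z \<in> topspace X" using assms(2) openin_subset[OF openin_star_sheet] by blast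
  ultimately show ?thesis using inj_on_star assms(1) by (meson inj_onD)
qed

lemma deck_image_star_sheet_subset:
  assumes g: "g \<in> G"
  shows "g ` star_sheet x y \<subseteq> star_sheet x (g y)"
proof
  fix z assume "z \<in> g ` star_sheet x y"
  then obtain V v where V: "V \<in> \<S>" "y \<in> V" "p ` V \<subseteq> p ` star x \<S>" "v \<in> V" "z = g v"
    by (auto simp: star_sheet_def)
  have "g ` V \<in> \<S>" "p ` g ` V = p ` V"
    using deck_member[OF g V(1)] deck_image_p[OF g member_subset_topspace[OF V(1)]] by simp_all
  then have "g ` V \<subseteq> star_sheet x (g y)" using member_subset_star_sheet V(2,3) by simp
  then show "z \<in> star_sheet x (g y)" using V(4,5) by blast
qed

lemma deck_image_star_sheet:
  assumes g: "g \<in> G" and y: "y \<in> topspace X"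
  shows "g ` star_sheet x y = star_sheet x (g y)"
proof
  show "g ` star_sheet x y \<subseteq> star_sheet x (g y)" by (rule deck_image_star_sheet_subset[OF g])
  obtain k where k: "k \<in> G" "\<And>z. z \<in> topspace X \<Longrightarrow> k (g z) = z"
    "\<And>z. z \<in> topspace X \<Longrightarrow> g (k z) = z"
    using deck_inverse[OF g] by metis
  show "star_sheet x (g y) \<subseteq> g ` star_sheet x y"
  proof
    fix w assume w: "w \<in> star_sheet x (g y)"
    then have "k w \<in> star_sheet x (k (g y))" using deck_image_star_sheet_subset[OF k(1)] by blast
    moreover have "w \<in> topspace X" using w openin_subset[OF openin_star_sheet] by blast
    ultimately show "w \<in> g ` star_sheet x y" using k(2)[OF y] k(3) by (metis image_eqI)
  qed
qed

lemma Union_star_sheets: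
  "\<Union>(star_sheet x ` {y \<in> topspace X. p y = p x}) = {z \<in> topspace X. p z \<in> p ` star x \<S>}"
proof
  show "\<Union>(star_sheet x ` {y \<in> topspace X. p y = p x}) \<subseteq> {z \<in> topspace X. p z \<in> p ` star x \<S>}"
    using openin_subset[OF openin_star_sheet] image_star_sheet by blast
  show "{z \<in> topspace X. p z \<in> p ` star x \<S>} \<subseteq> \<Union>(star_sheet x ` {y \<in> topspace X. p y = p x})"
  proof
    fix z assume "z \<in> {z \<in> topspace X. p z \<in> p ` star x \<S>}"
    then obtain U w where z: "z \<in> topspace X" and U: "U \<in> \<S>" "x \<in> U" "w \<in> U" "p z = p w"
      by (auto simp: star_def)
    obtain V where V: "V \<in> \<S>" "z \<in> V" "p ` V = p ` U"
      using sheet_through[OF U(1) z] U(3,4) by auto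
    then obtain y where y: "y \<in> V" "p y = p x" using U(2) by (metis imageE imageI)
    have "V \<subseteq> star_sheet x y"
      using member_subset_star_sheet V image_member_subset_image_star[OF U(1,2)] y(1) by simp
    moreover have "y \<in> {y \<in> topspace X. p y = p x}" using y V(1) member_subset_topspace by blast
    ultimately show "z \<in> \<Union>(star_sheet x ` {y \<in> topspace X. p y = p x})" using V(2) by blast
  qed
qed

lemma star_sheets:
  assumes x: "x \<in> topspace X"
  shows "\<exists>\<V>. sheets_over X Y p (star x \<S>) \<V> \<and> (\<forall>g\<in>G. \<forall>V\<in>\<V>. g ` V \<in> \<V>)"
proof (intro exI conjI ballI)
  let ?F = "{y \<in> topspace X. p y = p x}"
  have "star x \<S> \<in> star_sheet x ` ?F"
    by (rule image_eqI[where x=x]) (simp_all add: x star_sheet_self)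
  moreover have "pairwise disjnt (star_sheet x ` ?F)"
  proof (rule pairwiseI)
    fix B C assume "B \<in> star_sheet x ` ?F" "C \<in> star_sheet x ` ?F" "B \<noteq> C"
    then obtain y y' where y: "y \<in> ?F" "y' \<in> ?F" "B = star_sheet x y" "C = star_sheet x y'" "y \<noteq> y'"
      by blast
    then have "p y = p y'" by simp
    then have "z \<notin> C" if "z \<in> B" for z using star_sheet_eqI[of y y' z x] that y(3-5) by blast
    then show "disjnt B C" by (auto simp: disjnt_def)
  qed
  moreover have "openin X V \<and> homeomorphic_map (subtopology X V) (subtopology Y (p ` star x \<S>)) p"
    if V: "V \<in> star_sheet x ` ?F" for V
  proof -
    obtain y where y: "y \<in> topspace X" "p y = p x" "V = star_sheet x y" using V by blast
    then show ?thesis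
      using openin_star_sheet slice_of_homeomorphic_map[OF slice_of_star[OF y(1)] star_sheet_subset_star[of x y]]
        image_star_sheet[OF y(1,2)] by simp
  qed
  ultimately show "sheets_over X Y p (star x \<S>) (star_sheet x ` ?F)"
    by (simp add: sheets_over_def Union_star_sheets)
  fix g V assume g: "g \<in> G" and "V \<in> star_sheet x ` ?F"
  then obtain y where y: "y \<in> topspace X" "p y = p x" "V = star_sheet x y" by blast
  then have "g y \<in> ?F" using deck_topspace[OF g] deck_p[OF g] by simp
  then show "g ` V \<in> star_sheet x ` ?F" using deck_image_star_sheet[OF g y(1)] y(3) by blast
qed

lemma star_orbit_space:
  assumes x: "x \<in> topspace X"
  shows "star (orb x) {orb ` U |U. U \<in> \<S>} = orb ` star x \<S>"
proof
  show "star (orb x) {orb ` U |U. U \<in> \<S>} \<subseteq> orb ` star x \<S>"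
  proof
    fix B assume "B \<in> star (orb x) {orb ` U |U. U \<in> \<S>}"
    then obtain W where W: "W \<in> {orb ` U |U. U \<in> \<S>}" "orb x \<in> W" "B \<in> W"
      unfolding star_def by blast
    then obtain U where U: "U \<in> \<S>" "W = orb ` U" by blast
    obtain u where u: "u \<in> U" "orb u = orb x" using W(2) U(2) by auto
    obtain v where v: "v \<in> U" "B = orb v" using W(3) U(2) by auto
    have uv: "u \<in> topspace X" "v \<in> topspace X" using u(1) v(1) member_subset_topspace[OF U(1)] by auto
    then obtain g where g: "g \<in> G" "x = g u" using orbit_of_eq_iff[OF uv(1) x] u(2) by blast
    have "x \<in> g ` U" using g(2) u(1) by blast
    then have "g ` U \<subseteq> star x \<S>" by (rule subset_star[OF deck_member[OF g(1) U(1)]])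
    then have "g v \<in> star x \<S>" using v(1) by blast
    moreover have "orb (g v) = B" using orbit_of_deck[OF g(1) uv(2)] v(2) by simp
    ultimately show "B \<in> orb ` star x \<S>" by blast
  qed
  show "orb ` star x \<S> \<subseteq> star (orb x) {orb ` U |U. U \<in> \<S>}"
  proof
    fix B assume "B \<in> orb ` star x \<S>"
    then obtain U v where U: "U \<in> \<S>" "x \<in> U" "v \<in> U" "B = orb v" by (auto simp: star_def)
    then have "orb ` U \<in> {orb ` U |U. U \<in> \<S>}" "orb x \<in> orb ` U" "B \<in> orb ` U" by auto
    then show "B \<in> star (orb x) {orb ` U |U. U \<in> \<S>}" unfolding star_def by blast
  qed
qed

theorem overlay_with_class_map: "overlay_with XG Y q {orb ` U |U. U \<in> \<S>}"
proof -
  let ?S = "{orb ` U |U. U \<in> \<S>}"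
  have "\<Union>?S = topspace XG"
  proof
    show "\<Union>?S \<subseteq> topspace XG"
      using member_subset_topspace by (auto simp: topspace_orbit_space)
    show "topspace XG \<subseteq> \<Union>?S"
    proof
      fix B assume "B \<in> topspace XG"
      then obtain x where x: "x \<in> topspace X" "B = orb x" by (auto simp: topspace_orbit_space)
      then obtain U where "U \<in> \<S>" "x \<in> U" using Union_members by blast
      then show "B \<in> \<Union>?S" using x(2) by blast
    qed
  qed
  moreover have "\<exists>\<U> \<subseteq> ?S. sheets_over XG Y q W \<U>" if W: "W \<in> ?S" for W
  proof -
    obtain U where U: "U \<in> \<S>" "W = orb ` U" using W by blast
    obtain \<V> where \<V>: "\<V> \<subseteq> \<S>" "sheets_over X Y p U \<V>" "\<forall>g\<in>G. \<forall>V\<in>\<V>. g ` V \<in> \<V>"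
      using member_sheets[OF U(1)] by blast
    then have "sheets_over XG Y q W ((`) orb ` \<V>)"
      unfolding U(2) by (intro sheets_over_orbit_space) auto
    moreover have "(`) orb ` \<V> \<subseteq> ?S" using \<V>(1) by blast
    ultimately show ?thesis by blast
  qed
  ultimately have "covering_structure XG Y q ?S" by (rule covering_structureI)
  moreover have "slice_of XG Y q (star B ?S)" if B: "B \<in> topspace XG" for B
  proof -
    obtain x where x: "x \<in> topspace X" "B = orb x" using B by (auto simp: topspace_orbit_space)
    obtain \<V> where "sheets_over X Y p (star x \<S>) \<V>" "\<forall>g\<in>G. \<forall>V\<in>\<V>. g ` V \<in> \<V>"
      using star_sheets[OF x(1)] by blast
    then have "sheets_over XG Y q (orb ` star x \<S>) ((`) orb ` \<V>)"
      by (intro sheets_over_orbit_space) auto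
    then show ?thesis
      unfolding slice_of_iff_sheets_over star_orbit_space[OF x(1)] x(2) by blast
  qed
  ultimately show ?thesis
    by (simp add: overlay_with_def overlay_structure_def continuous_map_class_map)
qed

lemma covering_structure_orbit_of: "covering_structure X XG orb \<S>"
proof (rule covering_structureI[OF Union_members])
  fix U assume U: "U \<in> \<S>"
  let ?\<U> = "(\<lambda>g. g ` U) ` G"
  have "?\<U> \<subseteq> \<S>" using deck_member U by blast
  moreover have "U \<in> ?\<U>" by (rule image_eqI[where x="\<lambda>x. x"]) (simp_all add: deck_id)
  moreover have "pairwise disjnt ?\<U>"
  proof (rule pairwiseI)
    fix V W assume "V \<in> ?\<U>" "W \<in> ?\<U>" "V \<noteq> W"
    then obtain g h where "g \<in> G" "h \<in> G" "V = g ` U" "W = h ` U" "V \<noteq> W" by blast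
    moreover have "p ` g ` U = p ` h ` U" if "g \<in> G" "h \<in> G"
      using deck_image_p[OF that(1)] deck_image_p[OF that(2)] member_subset_topspace[OF U] by simp
    ultimately show "disjnt V W"
      using member_eqI[of V W] deck_member U by (auto simp: disjnt_def)
  qed
  moreover have "openin X V \<and> homeomorphic_map (subtopology X V) (subtopology XG (orb ` U)) orb"
    if V: "V \<in> ?\<U>" for V
  proof -
    obtain g where g: "g \<in> G" "V = g ` U" using V by blast
    then have V_member: "V \<in> \<S>" using deck_member U by simp
    have "homeomorphic_map (subtopology X V) (subtopology XG (orb ` V)) orb"
      using homeomorphic_map_orbit_of[OF openin_member[OF V_member]
          slice_of_inj_on[OF slice_of_member[OF V_member]]] .
    moreover have "orb ` V = orb ` U" using orbit_of_image_deck[OF g(1) member_subset_topspace[OF U]] g(2) by simp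
    ultimately show ?thesis using openin_member[OF V_member] by simp
  qed
  ultimately have "sheets_over X XG orb U ?\<U>"
    using saturation_orbit_of_image[OF member_subset_topspace[OF U]] by (simp add: sheets_over_def)
  then show "\<exists>\<U> \<subseteq> \<S>. sheets_over X XG orb U \<U>" using \<open>?\<U> \<subseteq> \<S>\<close> by blast
qed

lemma deck_fixes_or_moves_member:
  assumes g: "g \<in> G" and U: "U \<in> \<S>"
  shows "(\<forall>u\<in>U. g u = u) \<or> (\<forall>u\<in>U. g u \<noteq> u)"
proof (cases "g ` U \<inter> U = {}")
  case True
  have "g u \<noteq> u" if u: "u \<in> U" for u
  proof
    assume "g u = u"
    then have "u \<in> g ` U \<inter> U" using u by (metis IntI imageI)
    then show False using True by simp
  qed
  then show ?thesis by (intro disjI2 ballI)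
next
  case False
  have gU: "g ` U = U"
    using member_eqI[OF deck_member[OF g U] U False] deck_image_p[OF g member_subset_topspace[OF U]] by simp
  have "g u = u" if u: "u \<in> U" for u
  proof -
    have "g u \<in> U" using gU u by (metis imageI)
    moreover have "p (g u) = p u" using deck_p[OF g] member_subset_topspace[OF U] u by (metis subsetD)
    ultimately show ?thesis by (rule inj_onD[OF slice_of_inj_on[OF slice_of_member[OF U]] _ _ u, rotated])
  qed
  then show ?thesis by (intro disjI1 ballI)
qed

end

locale connected_overlay = overlay +
  assumes connected: "connected_space X"
begin

lemma deck_eq_id:
  assumes g: "g \<in> G" and x: "x \<in> topspace X" "g x = x" and y: "y \<in> topspace X"
  shows "g y = y"
proof -
  define F where "F = {z \<in> topspace X. g z = z}"
  have member_cases: "U \<subseteq> F \<or> U \<subseteq> topspace X - F" if U: "U \<in> \<S>" for U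
    using deck_fixes_or_moves_member[OF g U] member_subset_topspace[OF U] unfolding F_def by blast
  have "openin X F"
    unfolding openin_subopen[of X F]
  proof
    fix z assume z: "z \<in> F"
    then obtain U where U: "U \<in> \<S>" "z \<in> U" using Union_members unfolding F_def by blast
    then show "\<exists>T. openin X T \<and> z \<in> T \<and> T \<subseteq> F" using member_cases[OF U(1)] openin_member[OF U(1)] z by blast
  qed
  moreover have "openin X (topspace X - F)"
    unfolding openin_subopen[of X "topspace X - F"]
  proof
    fix z assume z: "z \<in> topspace X - F"
    then obtain U where U: "U \<in> \<S>" "z \<in> U" using Union_members by blast
    then show "\<exists>T. openin X T \<and> z \<in> T \<and> T \<subseteq> topspace X - F"
      using member_cases[OF U(1)] openin_member[OF U(1)] z by blast
  qed
  then have "closedin X F" unfolding closedin_def F_def by simp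
  ultimately have "F = {} \<or> F = topspace X"
    using connected unfolding connected_space_clopen_in by blast
  then show ?thesis using x y unfolding F_def by blast
qed

lemma deck_eq_id_if_inj_on:
  assumes A: "A \<subseteq> topspace X" "inj_on p A" and g: "g \<in> G" and a: "a \<in> A" "g a \<in> A"
    and y: "y \<in> topspace X"
  shows "g y = y"
proof -
  have "a \<in> topspace X" using A(1) a(1) by blast
  moreover have "p (g a) = p a" using deck_p[OF g] calculation by simp
  then have "g a = a" by (rule inj_onD[OF A(2) _ a(2,1)])
  ultimately show ?thesis using deck_eq_id[OF g _ _ y] by blast
qed

theorem overlay_action_deck: "overlay_action X G \<S>"
proof -
  have "free_action X G"
    unfolding free_action_def by (blast intro: deck_eq_id)
  moreover have "action_slice X G (star x \<S>)" if x: "x \<in> topspace X" for x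
    unfolding action_slice_def
  proof (intro conjI ballI impI openin_star)
    fix g y assume g: "g \<in> G" and "star x \<S> \<inter> g ` star x \<S> \<noteq> {}" and y: "y \<in> topspace X"
    then obtain w where "w \<in> star x \<S>" "g w \<in> star x \<S>" by blast
    then show "g y = y" by (rule deck_eq_id_if_inj_on[OF star_subset_topspace inj_on_star[OF x] g _ _ y])
  qed
  ultimately show ?thesis
    by (simp add: overlay_action_def covering_structure_orbit_of)
qed

end

theorem proposition5p5:
  fixes X :: "'a topology" and Y :: "'b topology" and p :: "'a \<Rightarrow> 'b" and \<S> :: "'a set set"
  assumes "overlay_with X Y p \<S>"
    and "connected_space X"
  shows "overlay_action X (deck_preserving X p \<S>) \<S> \<and>
         (\<exists>q. (\<forall>x\<in>topspace X. p x = q (orbit_of (deck_preserving X p \<S>) x)) \<and>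
              overlay_with (orbit_space X (deck_preserving X p \<S>)) Y q
                {orbit_of (deck_preserving X p \<S>) ` U |U. U \<in> \<S>})"
proof -
  interpret connected_overlay X Y p \<S> using assms by unfold_locales
  have "\<forall>x\<in>topspace X. p x = class_map p (orbit_of (deck_preserving X p \<S>) x)"
    using class_map_orbit_of by simp
  then show ?thesis using overlay_action_deck overlay_with_class_map by blast
qed

end
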